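(* Let $S=\mathbb{Z}_s$ and let $\mathcal{P}_0$ be a plan for an $s^t$ experiment on $b$ blocks of size $k$, with factor set $\mathcal{F}_0$. Suppose an orthogonal array $OA(N,m-1,s,2)$ exists and let $Q=Q(N,m,s)$ be the $N\times m$ array obtained by adjoining to it an all-zero column, placed as column $0$; index the columns of $Q$ by $0,1,\dots,m-1$. Then the plan $\mathcal{P}=Q\Diamond\mathcal{P}_0$ is a plan with $mt$ factors $\{P_i: P\in\mathcal{F}_0,\ 0\le i\le m-1\}$ on $bN$ blocks of size $k$, and: (a) for $P\neq Q'$ in $\mathcal{F}_0$, $P_i\perp_{bl}Q'_i$ in $\mathcal{P}$ for every $i$, $0\le i\le m-1$, if and only if $P\perp_{bl}Q'$ in $\mathcal{P}_0$; (b) $P_i\perp_{bl}Q'_j$ in $\mathcal{P}$ for all $P,Q'\in\mathcal{F}_0$ and all $i\ne j$, $0\le i,j\le m-1$.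
   Context: A plan for an $s^m$ experiment on $b$ blocks of size $k$: factors, each with level set $S=\mathbb{Z}_s$; a run is a vector of levels, one per factor; the plan is a collection of $b$ blocks, each a multiset of $k$ runs. For factors $A,A'$, $N_{AA'}$ is the $s\times s$ matrix whose $(p,q)$ entry is the number of runs (with multiplicity) in which $A$ is at level $p$ and $A'$ at level $q$; $L_A$ is the $s\times b$ matrix whose $(p,l)$ entry is the number of runs of block $l$ in which $A$ is at level $p$. $A\perp_{bl}A'$ (OTB) means $kN_{AA'}=L_AL_{A'}^T$. An orthogonal array $OA(N,n,s,2)$ is an $N\times n$ array with entries in $S$ such that in any two columns every ordered pair of symbols appears as a row exactly $N/s^2$ times. Construction $H\Diamond\mathcal{P}_0$: let $\mathcal{P}_0$ have $t$ factors $\mathcal{F}_0$, and let $H=(h_{ij})$ be a $p\times q$ array over $S$ with columns indexed by $j$. First form $\mathcal{P}_0^q$: the plan on the same blocks whose run in position $r$ of block $l$ is the concatenation of $q$ copies of the corresponding run of $\mathcal{P}_0$; its factors are $P_j$, $P\in\mathcal{F}_0$, $j$ ranging over column indices of $H$ ($P_j$ being factor $P$ in copy $j$). For each row $i$ of $H$ let $v_i\in S^{tq}$ be the vector that equals $h_{ij}$ in all $t$ coordinates of copy $j$. Then $H\Diamond\mathcal{P}_0$ is the plan whose blocks are $B+v_i$ for all blocks $B$ of $\mathcal{P}_0^q$ and all rows $i$ of $H$, where $B+v=\{x+v:x\in B\}$ with coordinatewise addition mod $s$. *)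

theory Defs
  imports "HOL-Library.Multiset"
begin

text \<open>Levels are the naturals 0..s-1 representing Z_s; a run is a function from
  factors to levels; a block is a multiset of runs; a plan is a list of blocks
  (the list index is the block label l).\<close>

type_synonym ('f) run = "'f \<Rightarrow> nat"
type_synonym ('f) plan = "('f run) multiset list"

definition is_plan :: "nat \<Rightarrow> 'f set \<Rightarrow> nat \<Rightarrow> nat \<Rightarrow> 'f plan \<Rightarrow> bool" where
  "is_plan s F b k P \<longleftrightarrow> length P = b \<and>
     (\<forall>B\<in>set P. size B = k \<and> (\<forall>x\<in>#B. \<forall>A\<in>F. x A < s))"

definition Nmat :: "'f plan \<Rightarrow> 'f \<Rightarrow> 'f \<Rightarrow> nat \<Rightarrow> nat \<Rightarrow> nat" where
  "Nmat P A A' p q = sum_list (map (\<lambda>B. size (filter_mset (\<lambda>x. x A = p \<and> x A' = q) B)) P)"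

definition Lmat :: "'f plan \<Rightarrow> 'f \<Rightarrow> nat \<Rightarrow> nat \<Rightarrow> nat" where
  "Lmat P A p l = size (filter_mset (\<lambda>x. x A = p) (P ! l))"

text \<open>Orthogonality through the block factor: k N_{AA'} = L_A L_{A'}^T (as s x s matrices).\<close>
definition OTB :: "nat \<Rightarrow> nat \<Rightarrow> 'f plan \<Rightarrow> 'f \<Rightarrow> 'f \<Rightarrow> bool" where
  "OTB s k P A A' \<longleftrightarrow> (\<forall>p<s. \<forall>q<s.
     k * Nmat P A A' p q = (\<Sum>l<length P. Lmat P A p l * Lmat P A' q l))"

text \<open>N > 0 (positive index); for the degenerate case n = 1 we also require the
  (for n >= 2 implied) strength-1 balance of each column: every symbol occurs N/s times.\<close>
definition is_OA :: "nat \<Rightarrow> nat \<Rightarrow> nat \<Rightarrow> (nat \<Rightarrow> nat \<Rightarrow> nat) \<Rightarrow> bool" where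
  "is_OA N n s H \<longleftrightarrow> 0 < N \<and> (\<forall>i<N. \<forall>j<n. H i j < s) \<and>
     (\<forall>j<n. \<forall>p<s. card {i. i < N \<and> H i j = p} * s = N) \<and>
     (\<forall>j1<n. \<forall>j2<n. j1 \<noteq> j2 \<longrightarrow> (\<forall>p<s. \<forall>q<s.
        card {i. i < N \<and> H i j1 = p \<and> H i j2 = q} * s^2 = N))"

definition Qarr :: "(nat \<Rightarrow> nat \<Rightarrow> nat) \<Rightarrow> nat \<Rightarrow> nat \<Rightarrow> nat" where
  "Qarr H i j = (if j = 0 then 0 else H i (j - 1))"

text \<open>H \<diamond> P0 for a p x q array H: factor (P,j) is factor P in copy j; block B + v_i
  for each row i and each block B of P0^q.  Values at (P,j) with j >= q are
  irrelevant (set to 0).\<close>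
definition diamond :: "nat \<Rightarrow> (nat \<Rightarrow> nat \<Rightarrow> nat) \<Rightarrow> nat \<Rightarrow> nat \<Rightarrow> 'f plan \<Rightarrow> ('f \<times> nat) plan" where
  "diamond s H p q P0 = concat (map (\<lambda>i. map (\<lambda>B.
      image_mset (\<lambda>x. (\<lambda>(A, j). if j < q then (x A + H i j) mod s else 0)) B) P0) [0..<p])"

end

theory Submission
  imports Defs
begin

(* Each block of Q \<diamond> P0 is a block of P0 shifted by a row of Q, and a shift by c merely
  relabels the levels a \<mapsto> a + c mod s.  Hence both sides of the OTB equation for (P_i, Q'_j)
  are sums over the rows of Q of the same quantities for P0 at shifted levels.  For i = j and
  the zero column this is N copies of the equation for (P, Q') in P0, which gives (a).  For
  i \<noteq> j, exchanging the sums over rows and runs turns both sides into counts of rows of Q with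
  prescribed entries in columns i and j.  In Q such a count depends on one entry only (it is
  N/s^2, or N/s times an indicator when column 0 is involved), and then k times the diagonal
  sum over the runs of a block equals the sum over all pairs of its runs, which gives (b). *)

lemma add_mod_eq_iff:
  fixes a c p s :: nat
  assumes "a < s" "c < s" "p < s"
  shows "(a + c) mod s = p \<longleftrightarrow> a = (p + s - c) mod s"
  using assms by (auto simp: mod_if)

lemma sub_mod_eq_iff:
  fixes a c p s :: nat
  assumes "a < s" "c < s" "p < s"
  shows "a = (p + s - c) mod s \<longleftrightarrow> c = (p + s - a) mod s"
  using add_mod_eq_iff[OF assms] add_mod_eq_iff[OF assms(2,1,3)] by (simp add: add.commute)

lemma sum_sum_mset_swap:
  "(\<Sum>r\<in>I. \<Sum>x\<in>#B. f r x) = (\<Sum>x\<in>#B. \<Sum>r\<in>I. (f r x :: 'a::comm_monoid_add))"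
  by (induction B) (auto simp: sum.distrib)

lemma sum_size_filter_mset:
  assumes "finite I"
  shows "(\<Sum>r\<in>I. size (filter_mset (R r) B)) = (\<Sum>x\<in>#B. card {r\<in>I. R r x})"
proof (induction B)
  case (add x B)
  have "size (filter_mset (R r) (add_mset x B)) = of_bool (R r x) + size (filter_mset (R r) B)" for r
    by simp
  moreover have "(\<Sum>r\<in>I. of_bool (R r x)) = card {r\<in>I. R r x}"
    using assms by (simp add: Int_def)
  ultimately show ?case using add by (simp add: sum.distrib)
qed simp

lemma size_filter_mult_size_filter:
  "size (filter_mset R A) * size (filter_mset S B) = (\<Sum>x\<in>#A. size (filter_mset (\<lambda>y. R x \<and> S y) B))"
  by (induction A) auto

lemma block_double_count:
  assumes "size B = k" "finite I"
    and indep: "\<And>x y. x \<in># B \<Longrightarrow> y \<in># B \<Longrightarrow> card {r\<in>I. R r x \<and> S r y} = \<psi> x"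
  shows "k * (\<Sum>r\<in>I. size (filter_mset (\<lambda>x. R r x \<and> S r x) B))
       = (\<Sum>r\<in>I. size (filter_mset (R r) B) * size (filter_mset (S r) B))"
proof -
  have "k * (\<Sum>r\<in>I. size (filter_mset (\<lambda>x. R r x \<and> S r x) B)) = k * (\<Sum>x\<in>#B. \<psi> x)"
    using indep by (simp add: sum_size_filter_mset[OF \<open>finite I\<close>] cong: image_mset_cong)
  also have "\<dots> = (\<Sum>x\<in>#B. \<Sum>y\<in>#B. card {r\<in>I. R r x \<and> S r y})"
    using indep \<open>size B = k\<close> by (simp add: sum_mset_distrib_left cong: image_mset_cong)
  also have "\<dots> = (\<Sum>x\<in>#B. \<Sum>r\<in>I. size (filter_mset (\<lambda>y. R r x \<and> S r y) B))"
    by (simp add: sum_size_filter_mset[OF \<open>finite I\<close>])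
  also have "\<dots> = (\<Sum>r\<in>I. size (filter_mset (R r) B) * size (filter_mset (S r) B))"
    by (simp add: size_filter_mult_size_filter sum_sum_mset_swap)
  finally show ?thesis .
qed

definition shift_run :: "nat \<Rightarrow> nat \<Rightarrow> (nat \<Rightarrow> nat) \<Rightarrow> 'f run \<Rightarrow> ('f \<times> nat) run" where
  "shift_run s m g x = (\<lambda>(A, j). if j < m then (x A + g j) mod s else 0)"

lemma diamond_altdef:
  "diamond s G N m P0 = concat (map (\<lambda>r. map (image_mset (shift_run s m (G r))) P0) [0..<N])"
  unfolding diamond_def shift_run_def ..

lemma length_diamond: "length (diamond s G N m P0) = N * length P0"
  by (simp add: diamond_altdef length_concat o_def sum_list_triv)

lemma sum_list_map_diamond:
  "sum_list (map h (diamond s G N m P0)) =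
    (\<Sum>r<N. \<Sum>l<length P0. h (image_mset (shift_run s m (G r)) (P0 ! l)))"
proof -
  have "sum_list (map h (concat (map g [0..<N]))) = (\<Sum>r<N. sum_list (map h (g r)))" for g
    by (induction N) simp_all
  then show ?thesis
    by (simp add: diamond_altdef sum_list_sum_nth atLeast0LessThan)
qed

lemma shift_run_eq_iff:
  assumes "x A < s" "g j < s" "j < m" "p < s"
  shows "shift_run s m g x (A, j) = p \<longleftrightarrow> x A = (p + s - g j) mod s"
  using add_mod_eq_iff[OF assms(1,2,4)] assms(3) by (simp add: shift_run_def)

lemma plan_entry_less:
  "is_plan s F b k P0 \<Longrightarrow> B \<in> set P0 \<Longrightarrow> x \<in># B \<Longrightarrow> A \<in> F \<Longrightarrow> x A < s"
  unfolding is_plan_def by blast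

lemma is_plan_diamond:
  assumes "0 < s" "is_plan s F b k P0"
  shows "is_plan s (F \<times> {0..<m}) (b * N) k (diamond s G N m P0)"
  unfolding is_plan_def
proof (intro conjI ballI)
  show "length (diamond s G N m P0) = b * N"
    using assms(2) by (simp add: is_plan_def length_diamond)
  fix B assume "B \<in> set (diamond s G N m P0)"
  then obtain r B0 where "B0 \<in> set P0" and B: "B = image_mset (shift_run s m (G r)) B0"
    by (auto simp: diamond_altdef)
  then show "size B = k"
    using assms(2) by (simp add: is_plan_def)
  show "x A < s" if "x \<in># B" "A \<in> F \<times> {0..<m}" for x A
    using that \<open>0 < s\<close> B by (auto simp: shift_run_def)
qed

lemma Nmat_diamond:
  assumes plan: "is_plan s F b k P0" and "P \<in> F" "Q \<in> F" "i < m" "j < m"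
    and "\<forall>r<N. G r i < s \<and> G r j < s" "p < s" "q < s"
  shows "Nmat (diamond s G N m P0) (P, i) (Q, j) p q =
    (\<Sum>r<N. Nmat P0 P Q ((p + s - G r i) mod s) ((q + s - G r j) mod s))"
proof -
  have "size (filter_mset (\<lambda>x. x (P, i) = p \<and> x (Q, j) = q) (image_mset (shift_run s m (G r)) B))
      = size (filter_mset (\<lambda>x. x P = (p + s - G r i) mod s \<and> x Q = (q + s - G r j) mod s) B)"
    if "r < N" "B \<in> set P0" for r B
    unfolding filter_mset_image_mset size_image_mset
    using that assms plan_entry_less[OF plan]
    by (intro arg_cong[where f=size] filter_mset_cong0) (simp add: shift_run_eq_iff)
  then show ?thesis
    unfolding Nmat_def sum_list_map_diamond by (simp add: sum_list_sum_nth atLeast0LessThan)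
qed

lemma sum_Lmat_diamond:
  assumes plan: "is_plan s F b k P0" and "P \<in> F" "Q \<in> F" "i < m" "j < m"
    and "\<forall>r<N. G r i < s \<and> G r j < s" "p < s" "q < s"
  shows "(\<Sum>l<length (diamond s G N m P0).
            Lmat (diamond s G N m P0) (P, i) p l * Lmat (diamond s G N m P0) (Q, j) q l) =
    (\<Sum>r<N. \<Sum>l<length P0.
            Lmat P0 P ((p + s - G r i) mod s) l * Lmat P0 Q ((q + s - G r j) mod s) l)"
proof -
  have "size (filter_mset (\<lambda>x. x (A, i') = p') (image_mset (shift_run s m (G r)) B))
      = size (filter_mset (\<lambda>x. x A = (p' + s - G r i') mod s) B)"
    if "B \<in> set P0" "A \<in> F" "i' < m" "G r i' < s" "p' < s" for r B A i' p'
    unfolding filter_mset_image_mset size_image_mset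
    using that plan_entry_less[OF plan]
    by (intro arg_cong[where f=size] filter_mset_cong0) (simp add: shift_run_eq_iff)
  then show ?thesis
    using sum_list_map_diamond[where h="\<lambda>B. size (filter_mset (\<lambda>x. x (P, i) = p) B)
                                            * size (filter_mset (\<lambda>x. x (Q, j) = q) B)"]
    unfolding Lmat_def by (simp add: sum_list_sum_nth atLeast0LessThan assms)
qed

lemma OTB_commute: "OTB s k P A A' \<longleftrightarrow> OTB s k P A' A"
  unfolding OTB_def Nmat_def by (auto simp: conj_commute mult.commute)

lemma OTB_diamond_same_column:
  assumes "is_plan s F b k P0" and "P \<in> F" "Q \<in> F" "i < m"
    and "\<forall>r<N. G r i < s" and "OTB s k P0 P Q"
  shows "OTB s k (diamond s G N m P0) (P, i) (Q, i)"
  unfolding OTB_def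
proof (intro allI impI)
  fix p q assume "p < s" "q < s"
  then show "k * Nmat (diamond s G N m P0) (P, i) (Q, i) p q =
      (\<Sum>l<length (diamond s G N m P0).
          Lmat (diamond s G N m P0) (P, i) p l * Lmat (diamond s G N m P0) (Q, i) q l)"
    using assms by (simp add: Nmat_diamond sum_Lmat_diamond sum_distrib_left OTB_def)
qed

lemma OTB_of_OTB_diamond_zero_column:
  assumes plan: "is_plan s F b k P0" and "P \<in> F" "Q \<in> F" "i < m"
    and "0 < N" and zero: "\<forall>r<N. G r i = 0"
    and OTB: "OTB s k (diamond s G N m P0) (P, i) (Q, i)"
  shows "OTB s k P0 P Q"
  unfolding OTB_def
proof (intro allI impI)
  fix p q assume "p < s" "q < s"
  have G: "\<forall>r<N. G r i < s \<and> G r i < s"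
    using zero \<open>p < s\<close> by simp
  have "N * (k * Nmat P0 P Q p q) = k * Nmat (diamond s G N m P0) (P, i) (Q, i) p q"
    using Nmat_diamond[where G=G, OF plan \<open>P \<in> F\<close> \<open>Q \<in> F\<close> \<open>i < m\<close> \<open>i < m\<close> G \<open>p < s\<close> \<open>q < s\<close>]
      zero \<open>p < s\<close> \<open>q < s\<close> by simp
  also have "\<dots> = (\<Sum>l<length (diamond s G N m P0).
      Lmat (diamond s G N m P0) (P, i) p l * Lmat (diamond s G N m P0) (Q, i) q l)"
    using OTB \<open>p < s\<close> \<open>q < s\<close> unfolding OTB_def by blast
  also have "\<dots> = N * (\<Sum>l<length P0. Lmat P0 P p l * Lmat P0 Q q l)"
    using sum_Lmat_diamond[where G=G, OF plan \<open>P \<in> F\<close> \<open>Q \<in> F\<close> \<open>i < m\<close> \<open>i < m\<close> G \<open>p < s\<close> \<open>q < s\<close>]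
      zero \<open>p < s\<close> \<open>q < s\<close> by simp
  finally show "k * Nmat P0 P Q p q = (\<Sum>l<length P0. Lmat P0 P p l * Lmat P0 Q q l)"
    using \<open>0 < N\<close> by simp
qed

lemma OTB_diamond_column_pair:
  assumes plan: "is_plan s F b k P0" and "P \<in> F" "Q \<in> F" "i < m" "j < m"
    and G: "\<forall>r<N. G r i < s \<and> G r j < s"
    and indep: "\<forall>a<s. \<forall>c<s. card {r. r < N \<and> G r i = a \<and> G r j = c} = \<phi> a"
  shows "OTB s k (diamond s G N m P0) (P, i) (Q, j)"
  unfolding OTB_def
proof (intro allI impI)
  fix p q assume "p < s" "q < s"
  define R where "R r x \<longleftrightarrow> x P = (p + s - G r i) mod s" for r and x :: "'a run"
  define S where "S r y \<longleftrightarrow> y Q = (q + s - G r j) mod s" for r and y :: "'a run"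
  have block: "k * (\<Sum>r<N. size (filter_mset (\<lambda>x. R r x \<and> S r x) B))
      = (\<Sum>r<N. size (filter_mset (R r) B) * size (filter_mset (S r) B))"
    if "B \<in> set P0" for B
  proof (rule block_double_count)
    show "size B = k"
      using plan that unfolding is_plan_def by blast
    fix x y assume "x \<in># B" "y \<in># B"
    then have "x P < s" "y Q < s"
      using plan_entry_less[OF plan \<open>B \<in> set P0\<close>] \<open>P \<in> F\<close> \<open>Q \<in> F\<close> by auto
    then have "R r x \<and> S r y \<longleftrightarrow> G r i = (p + s - x P) mod s \<and> G r j = (q + s - y Q) mod s"
      if "r < N" for r
      using G that \<open>p < s\<close> \<open>q < s\<close> by (simp add: R_def S_def sub_mod_eq_iff)
    then have "{r \<in> {..<N}. R r x \<and> S r y} =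
        {r. r < N \<and> G r i = (p + s - x P) mod s \<and> G r j = (q + s - y Q) mod s}"
      by blast
    then show "card {r \<in> {..<N}. R r x \<and> S r y} = \<phi> ((p + s - x P) mod s)"
      using indep \<open>p < s\<close> by simp
  qed simp
  have "k * Nmat (diamond s G N m P0) (P, i) (Q, j) p q
      = k * (\<Sum>r<N. \<Sum>l<length P0. size (filter_mset (\<lambda>x. R r x \<and> S r x) (P0 ! l)))"
    using Nmat_diamond[where G=G, OF plan assms(2-6) \<open>p < s\<close> \<open>q < s\<close>]
    by (simp add: Nmat_def sum_list_sum_nth atLeast0LessThan R_def S_def)
  also have "\<dots> = (\<Sum>l<length P0. k * (\<Sum>r<N. size (filter_mset (\<lambda>x. R r x \<and> S r x) (P0 ! l))))"
    by (subst sum.swap) (simp add: sum_distrib_left)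
  also have "\<dots> = (\<Sum>l<length P0. \<Sum>r<N. size (filter_mset (R r) (P0 ! l)) * size (filter_mset (S r) (P0 ! l)))"
    using block by simp
  also have "\<dots> = (\<Sum>l<length (diamond s G N m P0).
      Lmat (diamond s G N m P0) (P, i) p l * Lmat (diamond s G N m P0) (Q, j) q l)"
    using sum_Lmat_diamond[where G=G, OF plan assms(2-6) \<open>p < s\<close> \<open>q < s\<close>]
    by (subst sum.swap) (simp add: Lmat_def R_def[abs_def] S_def[abs_def])
  finally show "k * Nmat (diamond s G N m P0) (P, i) (Q, j) p q = (\<Sum>l<length (diamond s G N m P0).
      Lmat (diamond s G N m P0) (P, i) p l * Lmat (diamond s G N m P0) (Q, j) q l)" .
qed

lemma Qarr_less:
  assumes "0 < s" "is_OA N (m - 1) s H" "r < N" "i < m"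
  shows "Qarr H r i < s"
  using assms unfolding is_OA_def Qarr_def by auto

lemma Qarr_column_count_indep:
  assumes OA: "is_OA N (m - 1) s H" and "i < m" "j < m" "i \<noteq> j" "j \<noteq> 0"
  shows "\<exists>\<phi>. \<forall>a<s. \<forall>c<s. card {r. r < N \<and> Qarr H r i = a \<and> Qarr H r j = c} = \<phi> a"
proof -
  have "0 < N"
    using OA unfolding is_OA_def by blast
  show ?thesis
  proof (cases "i = 0")
    case True
    have "card {r. r < N \<and> H r (j - 1) = c} = N div s" if "c < s" for c
    proof -
      have "card {r. r < N \<and> H r (j - 1) = c} * s = N"
        using OA \<open>j < m\<close> \<open>j \<noteq> 0\<close> that unfolding is_OA_def by simp
      then show ?thesis
        using that by (metis nonzero_mult_div_cancel_right not_less_zero)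
    qed
    then have "card {r. r < N \<and> Qarr H r i = a \<and> Qarr H r j = c} = (if a = 0 then N div s else 0)"
      if "c < s" for a c
      using True \<open>j \<noteq> 0\<close> that by (simp add: Qarr_def)
    then show ?thesis
      by (intro exI[where x="\<lambda>a. if a = 0 then N div s else 0"]) blast
  next
    case False
    have "card {r. r < N \<and> Qarr H r i = a \<and> Qarr H r j = c} = N div s ^ 2"
      if "a < s" "c < s" for a c
    proof -
      have "card {r. r < N \<and> H r (i - 1) = a \<and> H r (j - 1) = c} * s ^ 2 = N"
        using OA False assms(2-5) that unfolding is_OA_def by simp
      then have "card {r. r < N \<and> H r (i - 1) = a \<and> H r (j - 1) = c} = N div s ^ 2"
        using that by (metis nonzero_mult_div_cancel_right not_less_zero power_not_zero)
      then show ?thesis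
        using False \<open>j \<noteq> 0\<close> by (simp add: Qarr_def)
    qed
    then show ?thesis
      by (intro exI[where x="\<lambda>_. N div s ^ 2"]) blast
  qed
qed

lemma OTB_diamond_Qarr_same_column_iff:
  assumes "0 < s" "is_plan s F b k P0" "1 \<le> m" "is_OA N (m - 1) s H" "P \<in> F" "Q \<in> F"
  shows "(\<forall>i<m. OTB s k (diamond s (Qarr H) N m P0) (P, i) (Q, i)) \<longleftrightarrow> OTB s k P0 P Q"
proof
  have "0 < N"
    using \<open>is_OA N (m - 1) s H\<close> unfolding is_OA_def by blast
  moreover have "0 < m" "\<forall>r<N. Qarr H r 0 = 0"
    using \<open>1 \<le> m\<close> by (simp_all add: Qarr_def)
  ultimately show "\<forall>i<m. OTB s k (diamond s (Qarr H) N m P0) (P, i) (Q, i) \<Longrightarrow> OTB s k P0 P Q"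
    using OTB_of_OTB_diamond_zero_column[OF assms(2,5,6)] by blast
  show "OTB s k P0 P Q \<Longrightarrow> \<forall>i<m. OTB s k (diamond s (Qarr H) N m P0) (P, i) (Q, i)"
    using OTB_diamond_same_column[OF assms(2,5,6)] Qarr_less[OF assms(1,4)] by blast
qed

lemma OTB_diamond_Qarr_distinct_columns:
  assumes "0 < s" "is_plan s F b k P0" "is_OA N (m - 1) s H" "P \<in> F" "Q \<in> F"
    and ij: "i < m" "j < m" "i \<noteq> j"
  shows "OTB s k (diamond s (Qarr H) N m P0) (P, i) (Q, j)"
proof -
  have Q_less: "\<forall>r<N. Qarr H r i < s \<and> Qarr H r j < s"
    using Qarr_less[OF assms(1,3)] ij by blast
  show ?thesis
  proof (cases "j = 0")
    case True
    then obtain \<phi> where "\<forall>a<s. \<forall>c<s. card {r. r < N \<and> Qarr H r j = a \<and> Qarr H r i = c} = \<phi> a"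
      using Qarr_column_count_indep[OF assms(3) ij(2,1)] ij(3) by auto
    then have "OTB s k (diamond s (Qarr H) N m P0) (Q, j) (P, i)"
      using OTB_diamond_column_pair[OF assms(2,5,4) ij(2,1)] Q_less by blast
    then show ?thesis
      by (simp add: OTB_commute)
  next
    case False
    then obtain \<phi> where "\<forall>a<s. \<forall>c<s. card {r. r < N \<and> Qarr H r i = a \<and> Qarr H r j = c} = \<phi> a"
      using Qarr_column_count_indep[OF assms(3) ij] by auto
    then show ?thesis
      using OTB_diamond_column_pair[OF assms(2,4,5) ij(1,2)] Q_less by blast
  qed
qed

theorem theorem4p1:
  fixes s t b k N m :: nat and F :: "'f set" and P0 :: "'f plan"
    and H :: "nat \<Rightarrow> nat \<Rightarrow> nat"
  assumes "0 < s"
    and "finite F" and "card F = t"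
    and "is_plan s F b k P0"
    and "1 \<le> m"
    and "is_OA N (m - 1) s H"
  shows "is_plan s (F \<times> {0..<m}) (b * N) k (diamond s (Qarr H) N m P0)
    \<and> card (F \<times> {0..<m}) = m * t
    \<and> (\<forall>P\<in>F. \<forall>Q'\<in>F. P \<noteq> Q' \<longrightarrow>
          ((\<forall>i<m. OTB s k (diamond s (Qarr H) N m P0) (P, i) (Q', i)) \<longleftrightarrow> OTB s k P0 P Q'))
    \<and> (\<forall>P\<in>F. \<forall>Q'\<in>F. \<forall>i<m. \<forall>j<m. i \<noteq> j \<longrightarrow>
          OTB s k (diamond s (Qarr H) N m P0) (P, i) (Q', j))"
  using is_plan_diamond[OF assms(1,4)] assms(2,3)
    OTB_diamond_Qarr_same_column_iff[OF assms(1,4,5,6)]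
    OTB_diamond_Qarr_distinct_columns[OF assms(1,4,6)]
  by (simp add: card_cartesian_product)

end
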